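(* Let $K$ be a convex subset of a Hilbert space $H$ whose linear span is closed, let $0=t_0<\dots<t_N=1$ and $x_0,\dots,x_N\in K$. If the solution $\gamma_K$ of problem $(\mathrm E_K)$ satisfies that $\gamma_K(t)$ lies in the relative interior of $K$ for all $t\in[0,1]$, then $\gamma_K=\gamma_H$, the solution of $(\mathrm E_H)$.
   Context: For a convex subset $K$ of a Hilbert space, problem $(\mathrm E_K)$ is: minimize $E[\gamma]=\int_0^1\|\ddot\gamma(t)\|^2\,dt$ over twice differentiable curves $\gamma:[0,1]\to K$ subject to $\gamma(t_i)=x_i$ for all $i$. By strict convexity of $E$ on admissible curves, the minimizer is unique when it exists, and is denoted $\gamma_K$. *)

theory Defs
  imports "HOL-Analysis.Analysis"
begin

definition twice_diff_on01 :: "(real \<Rightarrow> 'a::real_normed_vector) \<Rightarrow> bool" where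
  "twice_diff_on01 \<gamma> \<longleftrightarrow>
     (\<exists>\<gamma>' \<gamma>''. \<forall>t\<in>{0..1}.
        (\<gamma> has_vector_derivative \<gamma>' t) (at t within {0..1}) \<and>
        (\<gamma>' has_vector_derivative \<gamma>'' t) (at t within {0..1}))"

definition second_deriv01 :: "(real \<Rightarrow> 'a::real_normed_vector) \<Rightarrow> real \<Rightarrow> 'a" where
  "second_deriv01 \<gamma> t =
     vector_derivative (\<lambda>s. vector_derivative \<gamma> (at s within {0..1})) (at t within {0..1})"

definition energy_density :: "(real \<Rightarrow> 'a::real_normed_vector) \<Rightarrow> real \<Rightarrow> real" where
  "energy_density \<gamma> t = (norm (second_deriv01 \<gamma> t))\<^sup>2"

definition energy :: "(real \<Rightarrow> 'a::real_normed_vector) \<Rightarrow> real" where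
  "energy \<gamma> = integral {0..1} (energy_density \<gamma>)"

definition admissible ::
  "'a::real_normed_vector set \<Rightarrow> nat \<Rightarrow> (nat \<Rightarrow> real) \<Rightarrow> (nat \<Rightarrow> 'a) \<Rightarrow> (real \<Rightarrow> 'a) \<Rightarrow> bool" where
  "admissible K N t x \<gamma> \<longleftrightarrow>
     twice_diff_on01 \<gamma> \<and> (\<forall>s\<in>{0..1}. \<gamma> s \<in> K) \<and> (\<forall>i\<le>N. \<gamma> (t i) = x i) \<and>
     energy_density \<gamma> integrable_on {0..1}"

definition solves_E ::
  "'a::real_normed_vector set \<Rightarrow> nat \<Rightarrow> (nat \<Rightarrow> real) \<Rightarrow> (nat \<Rightarrow> 'a) \<Rightarrow> (real \<Rightarrow> 'a) \<Rightarrow> bool" where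
  "solves_E K N t x \<gamma> \<longleftrightarrow>
     admissible K N t x \<gamma> \<and> (\<forall>\<delta>. admissible K N t x \<delta> \<longrightarrow> energy \<gamma> \<le> energy \<delta>)"

end

theory Submission
  imports Defs
begin

text \<open>Let \<open>\<delta>\<close> be any admissible curve in \<open>H\<close>. Orthogonal projection onto the finite-dimensional
  affine span of the data turns \<open>\<delta>\<close> into a curve \<open>P\<close> that still interpolates, lies in the affine
  hull of \<open>K\<close>, and has energy at most \<open>E[\<delta>]\<close>, because the projection is a linear contraction
  and commutes with differentiation. Since \<open>\<gamma>\<^sub>K([0,1])\<close> is a compact subset of the relative
  interior of \<open>K\<close>, the curve \<open>(1 - \<epsilon>) \<gamma>\<^sub>K + \<epsilon> P\<close> stays in \<open>K\<close> for small \<open>\<epsilon> > 0\<close>.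
  Minimality of \<open>\<gamma>\<^sub>K\<close> and convexity of \<open>E\<close> then give
  \<open>E[\<gamma>\<^sub>K] \<le> (1 - \<epsilon>) E[\<gamma>\<^sub>K] + \<epsilon> E[P]\<close>, hence \<open>E[\<gamma>\<^sub>K] \<le> E[P] \<le> E[\<delta>]\<close>.\<close>

definition finite_orthonormal :: "'a::real_inner set \<Rightarrow> bool" where
  "finite_orthonormal E \<longleftrightarrow> finite E \<and> (\<forall>e\<in>E. norm e = 1) \<and> pairwise orthogonal E"

definition orth_proj :: "'a::real_inner set \<Rightarrow> 'a \<Rightarrow> 'a" where
  "orth_proj E y = (\<Sum>e\<in>E. (e \<bullet> y) *\<^sub>R e)"

lemma bounded_linear_orth_proj: "bounded_linear (orth_proj E)"
  unfolding orth_proj_def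
  by (intro bounded_linear_sum bounded_linear_scaleR_left
      bounded_linear_compose[OF bounded_linear_scaleR_left] bounded_linear_inner_right)

lemma orth_proj_in_span: "orth_proj E y \<in> span E"
  unfolding orth_proj_def by (intro span_sum span_scale span_base)

lemma inner_orth_proj: "a \<bullet> orth_proj E y = (\<Sum>e\<in>E. (e \<bullet> y) * (e \<bullet> a))"
  by (simp add: orth_proj_def inner_sum_right inner_commute)

lemma inner_orth_proj_basis:
  assumes "finite_orthonormal E" "e \<in> E"
  shows "e \<bullet> orth_proj E y = e \<bullet> y"
proof -
  have "e \<bullet> orth_proj E y = (\<Sum>f\<in>E. if f = e then e \<bullet> y else 0)"
    unfolding inner_orth_proj using assms
    by (intro sum.cong) (auto simp: finite_orthonormal_def pairwise_def orthogonal_def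
        inner_commute norm_eq_1)
  then show ?thesis using assms by (simp add: finite_orthonormal_def)
qed

lemma orth_proj_orthogonal:
  assumes "finite_orthonormal E" "v \<in> span E"
  shows "orthogonal v (y - orth_proj E y)"
proof -
  have "orthogonal e (y - orth_proj E y)" if "e \<in> E" for e
    by (simp add: orthogonal_def inner_diff_right inner_orth_proj_basis[OF assms(1) that])
  then show ?thesis
    by (metis orthogonal_commute orthogonal_to_span[OF assms(2)])
qed

lemma orth_proj_id:
  assumes "finite_orthonormal E" "v \<in> span E"
  shows "orth_proj E v = v"
proof -
  have "v - orth_proj E v \<in> span E"
    using assms(2) orth_proj_in_span by (rule span_diff)
  then have "orthogonal (v - orth_proj E v) (v - orth_proj E v)"
    by (rule orth_proj_orthogonal[OF assms(1)])
  then show ?thesis by (simp add: orthogonal_def)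
qed

lemma norm_orth_proj_le:
  assumes "finite_orthonormal E"
  shows "norm (orth_proj E y) \<le> norm y"
proof -
  have "orthogonal (orth_proj E y) (y - orth_proj E y)"
    by (rule orth_proj_orthogonal[OF assms orth_proj_in_span])
  then have "(norm y)\<^sup>2 = (norm (orth_proj E y))\<^sup>2 + (norm (y - orth_proj E y))\<^sup>2"
    using norm_add_Pythagorean[of "orth_proj E y" "y - orth_proj E y"] by simp
  then show ?thesis by (metis le_add_same_cancel1 power2_le_imp_le zero_le_power2 norm_ge_zero)
qed

lemma norm_orth_proj_sq:
  assumes "finite_orthonormal E"
  shows "(norm (orth_proj E y))\<^sup>2 = (\<Sum>e\<in>E. (e \<bullet> y)\<^sup>2)"
proof -
  have "(norm (orth_proj E y))\<^sup>2 = orth_proj E y \<bullet> y"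
    using orth_proj_orthogonal[OF assms orth_proj_in_span, of y]
    by (simp add: orthogonal_def inner_diff_right power2_norm_eq_inner)
  then show ?thesis by (simp add: inner_commute inner_orth_proj power2_eq_square)
qed

lemma finite_orthonormal_span_exists:
  fixes S :: "'a::real_inner set"
  assumes "finite S"
  obtains E where "finite_orthonormal E" "span E = span S"
  using assms
proof (induction arbitrary: thesis)
  case empty
  show ?case using empty.prems[of "{}"] by (simp add: finite_orthonormal_def)
next
  case (insert a S)
  obtain E where E: "finite_orthonormal E" "span E = span S"
    using insert.IH by blast
  define w where "w = a - orth_proj E a"
  have "a - w \<in> span E"
    by (simp add: w_def orth_proj_in_span)
  then have span_w: "span (insert w E) = span (insert a S)"
    using E(2) eq_span_insert_eq[of a w E] by (simp add: span_insert)
  show ?case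
  proof (cases "w = 0")
    case True
    then show ?thesis
      using insert.prems[OF E(1)] span_w E(2) by simp
  next
    case False
    define u where "u = w /\<^sub>R norm w"
    have "orthogonal e w" if "e \<in> E" for e
      using inner_orth_proj_basis[OF E(1) that]
      by (simp add: w_def orthogonal_def inner_diff_right)
    then have "finite_orthonormal (insert u E)"
      using E(1) False
      by (auto simp: finite_orthonormal_def u_def pairwise_insert orthogonal_commute
          orthogonal_clauses)
    moreover have "span (insert u E) = span (insert w E)"
    proof -
      have "w = norm w *\<^sub>R u" "u = inverse (norm w) *\<^sub>R w"
        using False by (simp_all add: u_def)
      then show ?thesis
        unfolding span_eq by (metis insert_subset span_scale span_superset)
    qed
    ultimately show ?thesis
      using insert.prems span_w by simp
  qed
qed

definition has_second_deriv01 :: "(real \<Rightarrow> 'a::real_normed_vector) \<Rightarrow> (real \<Rightarrow> 'a) \<Rightarrow> bool" where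
  "has_second_deriv01 \<gamma> \<gamma>'' \<longleftrightarrow> (\<exists>\<gamma>'. \<forall>t\<in>{0..1}.
      (\<gamma> has_vector_derivative \<gamma>' t) (at t within {0..1}) \<and>
      (\<gamma>' has_vector_derivative \<gamma>'' t) (at t within {0..1}))"

lemma vector_derivative_within_01:
  "(f has_vector_derivative f') (at t within {0..1}) \<Longrightarrow> t \<in> {0..1::real} \<Longrightarrow>
    vector_derivative f (at t within {0..1}) = f'"
  using vector_derivative_within_cbox[of 0 1 t f f'] by simp

lemma second_deriv01_eq:
  assumes "has_second_deriv01 \<gamma> \<gamma>''" "t \<in> {0..1}"
  shows "second_deriv01 \<gamma> t = \<gamma>'' t"
proof -
  obtain \<gamma>' where \<gamma>': "\<forall>t\<in>{0..1}. (\<gamma> has_vector_derivative \<gamma>' t) (at t within {0..1}) \<and>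
      (\<gamma>' has_vector_derivative \<gamma>'' t) (at t within {0..1})"
    using assms(1) unfolding has_second_deriv01_def by blast
  have "((\<lambda>s. vector_derivative \<gamma> (at s within {0..1})) has_vector_derivative \<gamma>'' t)
      (at t within {0..1})"
  proof (rule has_vector_derivative_transform[OF assms(2)])
    show "(\<gamma>' has_vector_derivative \<gamma>'' t) (at t within {0..1})"
      using \<gamma>' assms(2) by blast
    show "vector_derivative \<gamma> (at s within {0..1}) = \<gamma>' s" if "s \<in> {0..1}" for s
      using \<gamma>' that by (blast intro: vector_derivative_within_01)
  qed
  then show ?thesis
    unfolding second_deriv01_def using assms(2) by (rule vector_derivative_within_01)
qed

lemma has_second_deriv01_second_deriv01:
  assumes "twice_diff_on01 \<gamma>"
  shows "has_second_deriv01 \<gamma> (second_deriv01 \<gamma>)"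
proof -
  obtain \<gamma>'' where "has_second_deriv01 \<gamma> \<gamma>''"
    using assms unfolding twice_diff_on01_def has_second_deriv01_def by blast
  with second_deriv01_eq[OF this] show ?thesis
    unfolding has_second_deriv01_def by simp
qed

lemma has_second_deriv01_imp_twice_diff_on01: "has_second_deriv01 \<gamma> \<gamma>'' \<Longrightarrow> twice_diff_on01 \<gamma>"
  unfolding twice_diff_on01_def has_second_deriv01_def by blast

lemma has_second_deriv01_add:
  assumes "has_second_deriv01 \<gamma> a" "has_second_deriv01 \<delta> b"
  shows "has_second_deriv01 (\<lambda>s. \<gamma> s + \<delta> s) (\<lambda>s. a s + b s)"
proof -
  obtain \<gamma>' \<delta>' where
    "\<forall>t\<in>{0..1}. (\<gamma> has_vector_derivative \<gamma>' t) (at t within {0..1}) \<and>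
      (\<gamma>' has_vector_derivative a t) (at t within {0..1})"
    "\<forall>t\<in>{0..1}. (\<delta> has_vector_derivative \<delta>' t) (at t within {0..1}) \<and>
      (\<delta>' has_vector_derivative b t) (at t within {0..1})"
    using assms unfolding has_second_deriv01_def by blast
  then show ?thesis
    unfolding has_second_deriv01_def
    by (intro exI[of _ "\<lambda>s. \<gamma>' s + \<delta>' s"] ballI conjI has_vector_derivative_add) auto
qed

lemma has_second_deriv01_add_const:
  assumes "has_second_deriv01 \<gamma> a"
  shows "has_second_deriv01 (\<lambda>s. \<gamma> s + z) a"
  using assms by (simp add: has_second_deriv01_def has_vector_derivative_add_const)

lemma has_second_deriv01_linear_image:
  assumes "bounded_linear f" "has_second_deriv01 \<gamma> a"
  shows "has_second_deriv01 (\<lambda>s. f (\<gamma> s)) (\<lambda>s. f (a s))"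
proof -
  obtain \<gamma>' where
    "\<forall>t\<in>{0..1}. (\<gamma> has_vector_derivative \<gamma>' t) (at t within {0..1}) \<and>
      (\<gamma>' has_vector_derivative a t) (at t within {0..1})"
    using assms(2) unfolding has_second_deriv01_def by blast
  then show ?thesis
    unfolding has_second_deriv01_def
    by (intro exI[of _ "\<lambda>s. f (\<gamma>' s)"] ballI conjI
        bounded_linear.has_vector_derivative[OF assms(1)]) auto
qed

lemma has_second_deriv01_continuous_on:
  assumes "has_second_deriv01 \<gamma> a"
  shows "continuous_on {0..1} \<gamma>"
  using assms has_vector_derivative_continuous
  unfolding has_second_deriv01_def continuous_on_eq_continuous_within by blast

text \<open>Only scalar components are shown measurable: the measurability rules for sums and inner
  products of vector-valued maps need a second-countable codomain, which a general Hilbert space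
  is not. The finite sums defining \<^const>\<open>orth_proj\<close> reduce everything below to such components.\<close>

lemma has_second_deriv01_inner_measurable:
  assumes "has_second_deriv01 \<gamma> a"
  shows "(\<lambda>t. e \<bullet> a t) \<in> borel_measurable (lebesgue_on {0..1})"
proof -
  obtain \<gamma>' where "\<forall>t\<in>{0..1}. (\<gamma>' has_vector_derivative a t) (at t within {0..1})"
    using assms unfolding has_second_deriv01_def by blast
  then have "((\<lambda>s. e \<bullet> \<gamma>' s) has_vector_derivative e \<bullet> a t) (at t within {0..1})"
    if "t \<in> {0..1}" for t
    using bounded_linear.has_vector_derivative[OF bounded_linear_inner_right] that by blast
  then have "((\<lambda>t. e \<bullet> a t) has_integral (e \<bullet> \<gamma>' 1 - e \<bullet> \<gamma>' 0)) {0..1}"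
    using fundamental_theorem_of_calculus[of 0 1 "\<lambda>s. e \<bullet> \<gamma>' s" "\<lambda>t. e \<bullet> a t"] by auto
  then show ?thesis
    by (blast intro: integrable_imp_measurable)
qed

lemma energy_density_eq:
  assumes "has_second_deriv01 \<gamma> a" "s \<in> {0..1}"
  shows "energy_density \<gamma> s = (norm (a s))\<^sup>2"
  unfolding energy_density_def second_deriv01_eq[OF assms] ..

lemma energy_eq:
  assumes "has_second_deriv01 \<gamma> a"
  shows "energy \<gamma> = integral {0..1} (\<lambda>s. (norm (a s))\<^sup>2)"
  unfolding energy_def using energy_density_eq[OF assms] by (rule integral_cong)

lemma energy_density_integrable_iff:
  assumes "has_second_deriv01 \<gamma> a"
  shows "energy_density \<gamma> integrable_on {0..1} \<longleftrightarrow> (\<lambda>s. (norm (a s))\<^sup>2) integrable_on {0..1}"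
  using energy_density_eq[OF assms] by (rule integrable_cong)

lemma integrable_norm_orth_proj_sq:
  assumes "finite_orthonormal E" "has_second_deriv01 \<delta> c"
    and "(\<lambda>s. (norm (c s))\<^sup>2) integrable_on {0..1}"
  shows "(\<lambda>s. (norm (orth_proj E (c s)))\<^sup>2) integrable_on {0..1}"
proof (rule measurable_bounded_by_integrable_imp_integrable[OF _ assms(3)])
  show "(\<lambda>s. (norm (orth_proj E (c s)))\<^sup>2) \<in> borel_measurable (lebesgue_on {0..1})"
    unfolding norm_orth_proj_sq[OF assms(1)]
    by (intro borel_measurable_sum borel_measurable_power has_second_deriv01_inner_measurable[OF assms(2)])
  show "norm ((norm (orth_proj E (c s)))\<^sup>2) \<le> (norm (c s))\<^sup>2" for s
    using norm_orth_proj_le[OF assms(1)] by (simp add: power_mono)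
qed simp

lemma integrable_inner_orth_proj:
  assumes "finite_orthonormal E" "has_second_deriv01 \<gamma> a" "has_second_deriv01 \<delta> c"
    and "(\<lambda>s. (norm (a s))\<^sup>2) integrable_on {0..1}" "(\<lambda>s. (norm (c s))\<^sup>2) integrable_on {0..1}"
  shows "(\<lambda>s. a s \<bullet> orth_proj E (c s)) integrable_on {0..1}"
proof (rule measurable_bounded_by_integrable_imp_integrable)
  show "(\<lambda>s. a s \<bullet> orth_proj E (c s)) \<in> borel_measurable (lebesgue_on {0..1})"
    unfolding inner_orth_proj
    by (intro borel_measurable_sum borel_measurable_times
        has_second_deriv01_inner_measurable[OF assms(2)] has_second_deriv01_inner_measurable[OF assms(3)])
  show "(\<lambda>s. (norm (a s))\<^sup>2 + (norm (orth_proj E (c s)))\<^sup>2) integrable_on {0..1}"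
    using assms(4) integrable_norm_orth_proj_sq[OF assms(1,3,5)] by (rule integrable_add)
  show "norm (a s \<bullet> orth_proj E (c s)) \<le> (norm (a s))\<^sup>2 + (norm (orth_proj E (c s)))\<^sup>2" for s
    using Cauchy_Schwarz_ineq2[of "a s" "orth_proj E (c s)"]
      sum_squares_bound[of "norm (a s)" "norm (orth_proj E (c s))"] by simp
qed simp

lemma norm_convex_comb_sq:
  fixes u v :: "'a::real_inner"
  shows "(norm ((1 - \<epsilon>) *\<^sub>R u + \<epsilon> *\<^sub>R v))\<^sup>2
    = (1 - \<epsilon>) * (norm u)\<^sup>2 + \<epsilon> * (norm v)\<^sup>2 - \<epsilon> * (1 - \<epsilon>) * (norm (u - v))\<^sup>2"
  unfolding power2_norm_eq_inner
  by (simp add: inner_commute algebra_simps)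

lemma energy_convex_comb_le:
  assumes "has_second_deriv01 \<gamma> a" "has_second_deriv01 \<delta> b"
    and "(\<lambda>s. (norm (a s))\<^sup>2) integrable_on {0..1}" "(\<lambda>s. (norm (b s))\<^sup>2) integrable_on {0..1}"
    and "(\<lambda>s. a s \<bullet> b s) integrable_on {0..1}"
    and "0 \<le> \<epsilon>" "\<epsilon> \<le> 1"
  defines "\<nu> \<equiv> \<lambda>s. (1 - \<epsilon>) *\<^sub>R \<gamma> s + \<epsilon> *\<^sub>R \<delta> s"
  shows "has_second_deriv01 \<nu> (\<lambda>s. (1 - \<epsilon>) *\<^sub>R a s + \<epsilon> *\<^sub>R b s)"
    and "energy_density \<nu> integrable_on {0..1}"
    and "energy \<nu> \<le> (1 - \<epsilon>) * energy \<gamma> + \<epsilon> * energy \<delta>"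
proof -
  show D\<nu>: "has_second_deriv01 \<nu> (\<lambda>s. (1 - \<epsilon>) *\<^sub>R a s + \<epsilon> *\<^sub>R b s)"
    unfolding \<nu>_def
    by (intro has_second_deriv01_add has_second_deriv01_linear_image[OF bounded_linear_scaleR_right]
        assms(1,2))
  let ?c = "\<lambda>s. (1 - \<epsilon>) * (norm (a s))\<^sup>2 + \<epsilon> * (norm (b s))\<^sup>2"
  have "(norm (a s - b s))\<^sup>2 = (norm (a s))\<^sup>2 - 2 * (a s \<bullet> b s) + (norm (b s))\<^sup>2" for s
    unfolding power2_norm_eq_inner by (simp add: inner_diff_left inner_diff_right inner_commute)
  then have "(\<lambda>s. (norm (a s - b s))\<^sup>2) integrable_on {0..1}"
    using assms(3-5) by (simp add: integrable_diff integrable_add integrable_on_mult_right)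
  then have "(\<lambda>s. ?c s - \<epsilon> * (1 - \<epsilon>) * (norm (a s - b s))\<^sup>2) integrable_on {0..1}"
    using assms(3,4) by (intro integrable_diff integrable_add integrable_on_mult_right) simp_all
  then show int\<nu>: "energy_density \<nu> integrable_on {0..1}"
    by (simp add: energy_density_integrable_iff[OF D\<nu>] norm_convex_comb_sq)
  have "energy \<nu> \<le> integral {0..1} ?c"
    unfolding energy_eq[OF D\<nu>]
  proof (rule integral_le)
    show "(\<lambda>s. (norm ((1 - \<epsilon>) *\<^sub>R a s + \<epsilon> *\<^sub>R b s))\<^sup>2) integrable_on {0..1}"
      using int\<nu> by (simp add: energy_density_integrable_iff[OF D\<nu>])
    show "?c integrable_on {0..1}"
      using assms(3,4) by (intro integrable_add integrable_on_mult_right)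
    show "(norm ((1 - \<epsilon>) *\<^sub>R a s + \<epsilon> *\<^sub>R b s))\<^sup>2 \<le> ?c s" for s
      using assms(6,7) by (simp add: norm_convex_comb_sq)
  qed
  also have "\<dots> = (1 - \<epsilon>) * energy \<gamma> + \<epsilon> * energy \<delta>"
    using assms(3,4)
    by (simp add: energy_eq[OF assms(1)] energy_eq[OF assms(2)] integral_add integrable_on_mult_right)
  finally show "energy \<nu> \<le> (1 - \<epsilon>) * energy \<gamma> + \<epsilon> * energy \<delta>" .
qed

lemma rel_interior_compact_uniform_ball:
  assumes "compact C" "C \<subseteq> rel_interior K"
  obtains r where "r > 0" "\<And>y. y \<in> C \<Longrightarrow> ball y r \<inter> affine hull K \<subseteq> K"
proof -
  obtain U where U: "open U" "rel_interior K = U \<inter> affine hull K"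
    using openin_rel_interior[of K] by (auto simp: openin_open)
  moreover have "C \<subseteq> U"
    using assms(2) U(2) by blast
  ultimately obtain r where r: "r > 0" "(\<Union>y\<in>C. ball y r) \<subseteq> U"
    using compact_subset_open_imp_ball_epsilon_subset[OF assms(1)] by metis
  show ?thesis
  proof (rule that[OF r(1)])
    fix y assume "y \<in> C"
    then have "ball y r \<subseteq> U"
      using r(2) by blast
    then show "ball y r \<inter> affine hull K \<subseteq> K"
      using U(2) rel_interior_subset by blast
  qed
qed

lemma exists_small_convex_comb_mem:
  fixes \<gamma> P :: "'b \<Rightarrow> 'a::real_normed_vector"
  assumes "compact (\<gamma> ` S)" "\<gamma> ` S \<subseteq> rel_interior K"
    and "bounded ((\<lambda>s. P s - \<gamma> s) ` S)" "P ` S \<subseteq> affine hull K"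
  obtains \<epsilon> where "0 < \<epsilon>" "\<epsilon> \<le> 1"
    and "\<And>s. s \<in> S \<Longrightarrow> (1 - \<epsilon>) *\<^sub>R \<gamma> s + \<epsilon> *\<^sub>R P s \<in> K"
proof -
  obtain r where r: "r > 0" "\<And>y. y \<in> \<gamma> ` S \<Longrightarrow> ball y r \<inter> affine hull K \<subseteq> K"
    using rel_interior_compact_uniform_ball[OF assms(1,2)] by blast
  obtain M where M: "M > 0" "\<forall>y \<in> (\<lambda>s. P s - \<gamma> s) ` S. norm y \<le> M"
    using assms(3) unfolding bounded_pos by blast
  define \<epsilon> where "\<epsilon> = min 1 (r / (2 * M))"
  have \<epsilon>: "0 < \<epsilon>" "\<epsilon> \<le> 1" "\<epsilon> * M < r"
  proof -
    show "0 < \<epsilon>" "\<epsilon> \<le> 1"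
      using r(1) M(1) by (simp_all add: \<epsilon>_def)
    have "\<epsilon> * M \<le> r / (2 * M) * M"
      using M(1) by (intro mult_right_mono) (auto simp: \<epsilon>_def)
    then show "\<epsilon> * M < r"
      using r(1) M(1) by simp
  qed
  have "(1 - \<epsilon>) *\<^sub>R \<gamma> s + \<epsilon> *\<^sub>R P s \<in> K" (is "?v \<in> K") if s: "s \<in> S" for s
  proof -
    have "\<gamma> s \<in> affine hull K"
      using assms(2) s rel_interior_subset by (blast intro: hull_inc)
    moreover have "P s \<in> affine hull K"
      using assms(4) s by blast
    ultimately have aff: "?v \<in> affine hull K"
      by (simp add: mem_affine[OF affine_affine_hull])
    have "\<gamma> s - ?v = - (\<epsilon> *\<^sub>R (P s - \<gamma> s))"
      by (simp add: algebra_simps)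
    then have "dist (\<gamma> s) ?v = \<epsilon> * norm (P s - \<gamma> s)"
      using \<epsilon>(1) by (simp add: dist_norm)
    also have "\<dots> \<le> \<epsilon> * M"
      using M(2) s \<epsilon>(1) by simp
    also have "\<dots> < r"
      by (rule \<epsilon>(3))
    finally show ?thesis
      using aff r(2)[OF imageI[OF s]] by auto
  qed
  with \<epsilon>(1,2) show ?thesis
    by (rule that)
qed

lemma exists_projected_competitor:
  fixes x :: "nat \<Rightarrow> 'a::real_inner"
  assumes "\<forall>i\<le>N. x i \<in> K" "admissible UNIV N t x \<delta>"
    and "has_second_deriv01 \<gamma> a" "(\<lambda>s. (norm (a s))\<^sup>2) integrable_on {0..1}"
  obtains P b where "has_second_deriv01 P b" "(\<lambda>s. (norm (b s))\<^sup>2) integrable_on {0..1}"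
    and "(\<lambda>s. a s \<bullet> b s) integrable_on {0..1}"
    and "\<forall>i\<le>N. P (t i) = x i" "\<forall>s. P s \<in> affine hull K" "energy P \<le> energy \<delta>"
proof -
  define c where "c = second_deriv01 \<delta>"
  have Dc: "has_second_deriv01 \<delta> c"
    using assms(2) by (simp add: admissible_def c_def has_second_deriv01_second_deriv01)
  have ic: "(\<lambda>s. (norm (c s))\<^sup>2) integrable_on {0..1}"
    using assms(2) by (simp add: admissible_def energy_density_integrable_iff[OF Dc])
  obtain E where E: "finite_orthonormal E" "span E = span ((\<lambda>i. x i - x 0) ` {..N})"
    by (metis finite_orthonormal_span_exists finite_atMost finite_imageI)
  define P where "P s = x 0 + orth_proj E (\<delta> s - x 0)" for s
  have "P = (\<lambda>s. orth_proj E (\<delta> s) + (x 0 - orth_proj E (x 0)))"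
    by (simp add: P_def fun_eq_iff linear_diff[OF bounded_linear.linear[OF bounded_linear_orth_proj]])
  then have DP: "has_second_deriv01 P (\<lambda>s. orth_proj E (c s))"
    by (simp add: has_second_deriv01_add_const
        has_second_deriv01_linear_image[OF bounded_linear_orth_proj Dc])
  have "P (t i) = x i" if "i \<le> N" for i
  proof -
    have "x i - x 0 \<in> span E"
      using E(2) that by (auto intro: span_base)
    then show ?thesis
      using assms(2) that by (simp add: P_def admissible_def orth_proj_id[OF E(1)])
  qed
  moreover have "P s \<in> affine hull K" for s
  proof -
    have x0: "x 0 \<in> affine hull K"
      using assms(1) by (simp add: hull_inc)
    have "(\<lambda>i. x i - x 0) ` {..N} \<subseteq> (\<lambda>y. - x 0 + y) ` K"
      using assms(1) by force
    then have "orth_proj E (\<delta> s - x 0) \<in> span ((\<lambda>y. - x 0 + y) ` K)"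
      using E(2) orth_proj_in_span span_mono by blast
    then show ?thesis
      unfolding P_def affine_hull_span_gen[OF x0] by blast
  qed
  moreover have "energy P \<le> energy \<delta>"
    unfolding energy_eq[OF DP] energy_eq[OF Dc]
    using integrable_norm_orth_proj_sq[OF E(1) Dc ic] ic norm_orth_proj_le[OF E(1)]
    by (intro integral_le) (simp_all add: power_mono)
  ultimately show ?thesis
    using that[OF DP integrable_norm_orth_proj_sq[OF E(1) Dc ic]
        integrable_inner_orth_proj[OF E(1) assms(3) Dc assms(4) ic]] by blast
qed

lemma energy_le_competitor_in_affine_hull:
  assumes "solves_E K N t x \<gamma>" "\<forall>s\<in>{0..1}. \<gamma> s \<in> rel_interior K"
    and "has_second_deriv01 P b" "(\<lambda>s. (norm (b s))\<^sup>2) integrable_on {0..1}"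
    and "(\<lambda>s. second_deriv01 \<gamma> s \<bullet> b s) integrable_on {0..1}"
    and "\<forall>i\<le>N. P (t i) = x i" "\<forall>s\<in>{0..1}. P s \<in> affine hull K"
  shows "energy \<gamma> \<le> energy P"
proof -
  have adm: "admissible K N t x \<gamma>"
    and min: "\<And>\<delta>. admissible K N t x \<delta> \<Longrightarrow> energy \<gamma> \<le> energy \<delta>"
    using assms(1) by (auto simp: solves_E_def)
  define a where "a = second_deriv01 \<gamma>"
  have Da: "has_second_deriv01 \<gamma> a"
    using adm by (simp add: admissible_def a_def has_second_deriv01_second_deriv01)
  have ia: "(\<lambda>s. (norm (a s))\<^sup>2) integrable_on {0..1}"
    using adm by (simp add: admissible_def energy_density_integrable_iff[OF Da])
  have "compact (\<gamma> ` {0..1})"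
    by (intro compact_continuous_image has_second_deriv01_continuous_on[OF Da] compact_Icc)
  moreover have "bounded ((\<lambda>s. P s - \<gamma> s) ` {0..1})"
    by (intro compact_imp_bounded compact_continuous_image continuous_on_diff compact_Icc
        has_second_deriv01_continuous_on[OF Da] has_second_deriv01_continuous_on[OF assms(3)])
  ultimately obtain \<epsilon> where \<epsilon>: "0 < \<epsilon>" "\<epsilon> \<le> 1"
    and \<nu>K: "\<And>s. s \<in> {0..1} \<Longrightarrow> (1 - \<epsilon>) *\<^sub>R \<gamma> s + \<epsilon> *\<^sub>R P s \<in> K"
    using exists_small_convex_comb_mem[of \<gamma> "{0..1}" K P] assms(2,7) by blast
  define \<nu> where "\<nu> = (\<lambda>s. (1 - \<epsilon>) *\<^sub>R \<gamma> s + \<epsilon> *\<^sub>R P s)"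
  note \<nu> = energy_convex_comb_le[OF Da assms(3) ia assms(4) assms(5)[folded a_def]
      less_imp_le[OF \<epsilon>(1)] \<epsilon>(2), folded \<nu>_def]
  have "admissible K N t x \<nu>"
    using has_second_deriv01_imp_twice_diff_on01[OF \<nu>(1)] \<nu>K \<nu>(2) adm assms(6)
    by (auto simp: admissible_def \<nu>_def algebra_simps)
  then have "energy \<gamma> \<le> (1 - \<epsilon>) * energy \<gamma> + \<epsilon> * energy P"
    using min \<nu>(3) by fastforce
  then show ?thesis
    using \<epsilon>(1) by (simp add: algebra_simps)
qed

theorem proposition8:
  fixes K :: "'a::{real_inner, complete_space} set"
    and N :: nat and t :: "nat \<Rightarrow> real" and x :: "nat \<Rightarrow> 'a"
    and \<gamma>K :: "real \<Rightarrow> 'a"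
  assumes "convex K"
    and "closed (span K)"
    and "t 0 = 0" and "t N = 1"
    and "\<forall>i<N. t i < t (Suc i)"
    and "\<forall>i\<le>N. x i \<in> K"
    and "solves_E K N t x \<gamma>K"
    and "\<forall>s\<in>{0..1}. \<gamma>K s \<in> rel_interior K"
  shows "solves_E UNIV N t x \<gamma>K"
proof -
  have adm: "admissible K N t x \<gamma>K"
    using assms(7) by (simp add: solves_E_def)
  have "energy \<gamma>K \<le> energy \<delta>" if \<delta>: "admissible UNIV N t x \<delta>" for \<delta>
  proof -
    have Da: "has_second_deriv01 \<gamma>K (second_deriv01 \<gamma>K)"
      using adm by (simp add: admissible_def has_second_deriv01_second_deriv01)
    moreover have "(\<lambda>s. (norm (second_deriv01 \<gamma>K s))\<^sup>2) integrable_on {0..1}"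
      using adm by (simp add: admissible_def energy_density_integrable_iff[OF Da])
    ultimately obtain P b where "has_second_deriv01 P b" "(\<lambda>s. (norm (b s))\<^sup>2) integrable_on {0..1}"
      "(\<lambda>s. second_deriv01 \<gamma>K s \<bullet> b s) integrable_on {0..1}"
      "\<forall>i\<le>N. P (t i) = x i" "\<forall>s. P s \<in> affine hull K" "energy P \<le> energy \<delta>"
      by (rule exists_projected_competitor[OF assms(6) \<delta>])
    then show ?thesis
      using energy_le_competitor_in_affine_hull[OF assms(7,8)] by fastforce
  qed
  with adm show ?thesis
    by (simp add: solves_E_def admissible_def)
qed

end
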